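(* Let $\lambda$ be an infinite cardinal, $\theta$ an infinite regular cardinal with $\theta<\lambda$, and $\chi$ either $2$ or an infinite cardinal. Then: (1) $\lambda\le m(\theta,\lambda)\le\min\{\mathrm{cf}([\lambda]^\theta,\subseteq),\mathrm{cf}([\lambda]^\theta,\supseteq)\}$; (2) if $\chi\le\theta^+$, then $m(\theta,\lambda)\le m(\theta,\lambda,\theta,\chi)$; (3) $m(\theta,\theta,\theta,\chi)\le m(\lambda,\lambda,\theta,\chi)\le\max\{m(\theta,\theta,\theta,\chi),m(\theta,\lambda)\}$.
   Context: $m(\theta,\lambda)$ is the least size of $\mathcal Y\subseteq[\lambda]^\theta$ such that every $X\in[\lambda]^\theta$ meets some $Y\in\mathcal Y$ in a set of size $\theta$. For a set $\Delta$ with $|\Delta|\ge\theta$, $m(\Delta,\lambda,\theta,\chi)$ is the least size of a family $\mathcal H$ of functions from $\Delta$ to $[\lambda]^{<\chi}$ such that for every $X\in[\Delta]^\theta$ and every $g:X\to\lambda$ there is $h\in\mathcal H$ with $|\{\xi\in X\mid g(\xi)\in h(\xi)\}|=\theta$. $\mathrm{cf}([\lambda]^\theta,\subseteq)$ is the least size of $\mathcal Y\subseteq[\lambda]^\theta$ such that every $X\in[\lambda]^\theta$ is contained in some member of $\mathcal Y$; $\mathrm{cf}([\lambda]^\theta,\supseteq)$ is the least size of $\mathcal Y\subseteq[\lambda]^\theta$ such that every $X\in[\lambda]^\theta$ contains some member of $\mathcal Y$. *)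

theory Defs
  imports Main
begin


text \<open>Cardinals are represented by sets (via their cardinality card_of A, a well-order
relation).  A cardinal invariant defined as "the least size of a family with
property P" is rendered as the cardinality of some family with property P
whose size is below (\<le>o) the size of every family with property P.\<close>

definition mincard :: "('b set \<Rightarrow> bool) \<Rightarrow> 'b rel" where
  "mincard P = card_of (SOME X. P X \<and> (\<forall>Y. P Y \<longrightarrow> (card_of X, card_of Y) \<in> ordLeq))"

definition subsets_of_size :: "'a set \<Rightarrow> 'a set \<Rightarrow> 'a set set" where
  "subsets_of_size L T = {X. X \<subseteq> L \<and> (card_of X, card_of T) \<in> ordIso}"

definition m_cov :: "'a set \<Rightarrow> 'a set \<Rightarrow> 'a set rel" where
  "m_cov T L = mincard (\<lambda>\<Y>. \<Y> \<subseteq> subsets_of_size L T \<and>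
      (\<forall>X \<in> subsets_of_size L T. \<exists>Y \<in> \<Y>. (card_of (X \<inter> Y), card_of T) \<in> ordIso))"

text \<open>m(Delta, lambda, theta, chi): functions Delta \<rightarrow> [lambda]^{<chi}
  (represented as functions that are empty outside Delta).\<close>
definition m_fun :: "'a set \<Rightarrow> 'a set \<Rightarrow> 'a set \<Rightarrow> 'a set \<Rightarrow> ('a \<Rightarrow> 'a set) rel" where
  "m_fun D L T C = mincard (\<lambda>\<H>.
      (\<forall>h \<in> \<H>. (\<forall>\<xi> \<in> D. h \<xi> \<subseteq> L \<and> (card_of (h \<xi>), card_of C) \<in> ordLess) \<and> (\<forall>\<xi>. \<xi> \<notin> D \<longrightarrow> h \<xi> = {})) \<and>
      (\<forall>X \<in> subsets_of_size D T. \<forall>g. (\<forall>\<xi> \<in> X. g \<xi> \<in> L) \<longrightarrow>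
          (\<exists>h \<in> \<H>. (card_of {\<xi> \<in> X. g \<xi> \<in> h \<xi>}, card_of T) \<in> ordIso)))"

definition cf_sub :: "'a set \<Rightarrow> 'a set \<Rightarrow> 'a set rel" where
  "cf_sub T L = mincard (\<lambda>\<Y>. \<Y> \<subseteq> subsets_of_size L T \<and>
      (\<forall>X \<in> subsets_of_size L T. \<exists>Y \<in> \<Y>. X \<subseteq> Y))"

definition cf_sup :: "'a set \<Rightarrow> 'a set \<Rightarrow> 'a set rel" where
  "cf_sup T L = mincard (\<lambda>\<Y>. \<Y> \<subseteq> subsets_of_size L T \<and>
      (\<forall>X \<in> subsets_of_size L T. \<exists>Y \<in> \<Y>. Y \<subseteq> X))"

end

theory Submission
  imports Defs
begin

text \<open>
  (1) Fewer than \<lambda> sets of size \<theta> have a union of size < \<lambda>, so a \<theta>-subset of its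
  complement escapes a small family; cofinal and coinitial families are covering.
  (2) If h guesses a bijection e from \<theta> onto X on \<theta> many points, the range of h
  meets X in \<theta> points; ranges have size \<le> \<theta> because \<chi> is at most the
  successor of \<theta>.
  (3) Guessing families can be pulled back along injections of index and value sets,
  which gives the first inequality. For the second, take a covering family \<Y> and a
  guessing family H0 on \<theta>, copy H0 to every pair Y, Y' \<in> \<Y> via
  bijections with \<theta>, and add the constant functions. Given X and g, some Y meets X in
  \<theta> points; by regularity g either has a fiber of size \<theta> there, caught by a constant
  function, or takes \<theta> values there, which some Y' meets in \<theta> points, and then the
  copy of H0 for (Y, Y') guesses g. The new family has size at most
  max(|H0|, |\<Y>|), since \<lambda> \<le> |\<Y>|.
\<close>

context includes cardinal_syntax
begin

section \<open>Least sizes of families\<close>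

lemma mincard_attained:
  assumes "P Y"
  shows "\<exists>X. P X \<and> mincard P = card_of X \<and> (\<forall>Y. P Y \<longrightarrow> |X| \<le>o |Y| )"
proof -
  obtain r where "r \<in> card_of ` Collect P" "\<forall>r' \<in> card_of ` Collect P. r \<le>o r'"
    using exists_minim_Well_order[of "card_of ` Collect P"] assms card_of_Well_order by blast
  then have "\<exists>X. P X \<and> (\<forall>Y. P Y \<longrightarrow> |X| \<le>o |Y| )"
    by auto
  from someI_ex[OF this] show ?thesis
    unfolding mincard_def by blast
qed

lemma mincard_le: "P Y \<Longrightarrow> mincard P \<le>o |Y|"
  using mincard_attained by metis

lemma mincard_ge:
  assumes "P Y" and "\<And>Y. P Y \<Longrightarrow> r \<le>o |Y|"
  shows "r \<le>o mincard P"
  using mincard_attained[of P, OF assms(1)] assms(2) by metis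

lemma mincard_antimono:
  assumes "Q Y" and "\<And>Y. Q Y \<Longrightarrow> P Y"
  shows "mincard P \<le>o mincard Q"
  using assms by (intro mincard_ge[of Q] mincard_le)

lemma mincard_le_mincard:
  assumes "Q Y" and "\<And>Y. Q Y \<Longrightarrow> \<exists>X. P X \<and> |X| \<le>o |Y|"
  shows "mincard P \<le>o mincard Q"
proof (rule mincard_ge[of Q, OF assms(1)])
  fix Y assume "Q Y"
  then obtain X where "P X" "|X| \<le>o |Y|"
    using assms(2) by blast
  then show "mincard P \<le>o |Y|"
    using mincard_le ordLeq_transitive by blast
qed

section \<open>Cardinal arithmetic\<close>

lemma card_of_ordLess_iff_not_ordLeq: "|A| <o |B| \<longleftrightarrow> \<not> |B| \<le>o |A|"
  using not_ordLeq_iff_ordLess[OF card_of_Well_order card_of_Well_order] by blast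

lemma card_of_ordLeq_total: "|A| \<le>o |B| \<or> |B| \<le>o |A|"
  using ordLeq_total[OF card_of_Well_order card_of_Well_order] .

lemma Cinfinite_card_of: "infinite A \<Longrightarrow> Cinfinite |A|"
  by (simp add: cinfinite_def Field_card_of card_of_card_order_on)

lemma card_of_image_inj_on: "inj_on f A \<Longrightarrow> |f ` A| =o |A|"
  by (rule ordIso_symmetric[OF card_of_ordIsoI[OF inj_on_imp_bij_betw]])

lemma obtain_subset_card_of_ordIso:
  assumes "|T| \<le>o |S|"
  obtains X where "X \<subseteq> S" "|X| =o |T|"
proof -
  obtain f where "inj_on f T" "f ` T \<subseteq> S"
    using assms card_of_ordLeq by metis
  then show ?thesis
    using that card_of_image_inj_on by blast
qed

lemma card_of_ordIso_between:
  assumes "A \<subseteq> S" "S \<subseteq> X" and "|X| =o |T|" and "|T| \<le>o |A|"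
  shows "|S| =o |T|"
proof -
  have "|S| \<le>o |T|"
    using card_of_mono1[OF assms(2)] assms(3) ordIso_iff_ordLeq ordLeq_transitive by blast
  moreover have "|T| \<le>o |S|"
    using assms(4) card_of_mono1[OF assms(1)] by (rule ordLeq_transitive)
  ultimately show ?thesis
    by (simp add: ordIso_iff_ordLeq)
qed

lemma card_of_singleton_ordLess:
  assumes "2 \<le> card C \<or> infinite C"
  shows "|{v}| <o |C|"
proof -
  obtain B where "B \<subseteq> C" "card B = 2"
    using assms obtain_subset_with_card_n infinite_arbitrarily_large by metis
  then obtain a b where "a \<in> C" "b \<in> C" "a \<noteq> b"
    by (auto simp: card_2_iff)
  then have "\<not> |C| \<le>o |{v}|"
    unfolding card_of_ordLeq[symmetric] inj_on_def by blast
  then show ?thesis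
    by (simp add: card_of_ordLess_iff_not_ordLeq)
qed

lemma card_of_Diff_ordLess_infinite:
  assumes "infinite L" "|A| <o |L|"
  shows "|L| \<le>o |L - A|"
proof (rule ccontr)
  assume "\<not> |L| \<le>o |L - A|"
  then have "|L - A| <o |L|"
    by (simp add: card_of_ordLess_iff_not_ordLeq)
  then have "|(L - A) \<union> A| <o |L|"
    using card_of_Un_ordLess_infinite[OF assms(1) _ assms(2)] by blast
  moreover have "|L| \<le>o |(L - A) \<union> A|"
    by (rule card_of_mono1) blast
  ultimately show False
    using not_ordLess_ordLeq by blast
qed

lemma card_of_UNION_ordLess_infinite_bound:
  assumes "infinite T" "|I| <o |L|" "|T| <o |L|" and "\<forall>i \<in> I. |A i| \<le>o |T|"
  shows "|\<Union>i \<in> I. A i| <o |L|"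
  using card_of_ordLeq_total[of I T]
proof
  assume "|I| \<le>o |T|"
  then have "|\<Union>i \<in> I. A i| \<le>o |T|"
    using card_of_UNION_ordLeq_infinite[OF assms(1)] assms(4) by blast
  then show ?thesis
    using assms(3) by (rule ordLeq_ordLess_trans)
next
  assume TI: "|T| \<le>o |I|"
  then have "|\<Union>i \<in> I. A i| \<le>o |I|"
    using card_of_UNION_ordLeq_infinite[OF card_of_ordLeq_infinite[OF TI assms(1)]]
      ordLeq_refl[OF card_of_Card_order] assms(4) ordLeq_transitive[OF _ TI] by blast
  then show ?thesis
    using assms(2) by (rule ordLeq_ordLess_trans)
qed

lemma card_of_Un_UNION2_ordLeq:
  assumes "Cinfinite r" "|A| \<le>o r" "|I| \<le>o r" "\<forall>i \<in> I. \<forall>j \<in> I. |B i j| \<le>o r"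
  shows "|A \<union> (\<Union>i \<in> I. \<Union>j \<in> I. B i j)| \<le>o r"
proof -
  have "\<forall>i \<in> I. |\<Union>j \<in> I. B i j| \<le>o r"
    using UNION_Cinfinite_bound[OF assms(3) _ assms(1)] assms(4) by blast
  then have "|\<Union>i \<in> I. \<Union>j \<in> I. B i j| \<le>o r"
    by (rule UNION_Cinfinite_bound[OF assms(3) _ assms(1)])
  then show ?thesis
    by (rule Un_Cinfinite_bound[OF assms(2) _ assms(1)])
qed

lemma card_of_regular_large_fiber_or_image:
  assumes "infinite T" "regularCard |T|" "|T| \<le>o |A|"
  shows "(\<exists>v. |T| \<le>o |{x \<in> A. g x = v}| ) \<or> |T| \<le>o |g ` A|"
proof (rule ccontr)
  assume "\<not> ?thesis"
  then have image: "|g ` A| <o |T|" and fibers: "\<forall>v \<in> g ` A. |{x \<in> A. g x = v}| <o |T|"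
    by (simp_all add: card_of_ordLess_iff_not_ordLeq)
  have "|\<Union>v \<in> g ` A. {x \<in> A. g x = v}| <o |T|"
    using card_of_UNION_ordLess_infinite_Field_regularCard[OF assms(2) _ image fibers]
      Cinfinite_card_of[OF assms(1)] by simp
  moreover have "(\<Union>v \<in> g ` A. {x \<in> A. g x = v}) = A"
    by auto
  ultimately show False
    using not_ordLess_ordLeq assms(3) by metis
qed

section \<open>Covering, cofinal and guessing families\<close>

definition covering_family :: "'a set \<Rightarrow> 'a set \<Rightarrow> 'a set set \<Rightarrow> bool" where
  "covering_family T L YY \<longleftrightarrow> YY \<subseteq> subsets_of_size L T \<and>
     (\<forall>X \<in> subsets_of_size L T. \<exists>Y \<in> YY. |X \<inter> Y| =o |T| )"

definition cofinal_family :: "'a set \<Rightarrow> 'a set \<Rightarrow> 'a set set \<Rightarrow> bool" where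
  "cofinal_family T L YY \<longleftrightarrow> YY \<subseteq> subsets_of_size L T \<and>
     (\<forall>X \<in> subsets_of_size L T. \<exists>Y \<in> YY. X \<subseteq> Y)"

definition coinitial_family :: "'a set \<Rightarrow> 'a set \<Rightarrow> 'a set set \<Rightarrow> bool" where
  "coinitial_family T L YY \<longleftrightarrow> YY \<subseteq> subsets_of_size L T \<and>
     (\<forall>X \<in> subsets_of_size L T. \<exists>Y \<in> YY. Y \<subseteq> X)"

definition small_valued :: "'a set \<Rightarrow> 'b set \<Rightarrow> 'c set \<Rightarrow> ('a \<Rightarrow> 'b set) \<Rightarrow> bool" where
  "small_valued D L C h \<longleftrightarrow>
     (\<forall>\<xi> \<in> D. h \<xi> \<subseteq> L \<and> |h \<xi>| <o |C| ) \<and> (\<forall>\<xi>. \<xi> \<notin> D \<longrightarrow> h \<xi> = {})"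

definition guessing_family ::
    "'a set \<Rightarrow> 'b set \<Rightarrow> 'a set \<Rightarrow> 'c set \<Rightarrow> ('a \<Rightarrow> 'b set) set \<Rightarrow> bool" where
  "guessing_family D L T C H \<longleftrightarrow> (\<forall>h \<in> H. small_valued D L C h) \<and>
     (\<forall>X \<in> subsets_of_size D T. \<forall>g. (\<forall>\<xi> \<in> X. g \<xi> \<in> L) \<longrightarrow>
        (\<exists>h \<in> H. |{\<xi> \<in> X. g \<xi> \<in> h \<xi>}| =o |T| ))"

lemma m_cov_eq_mincard: "m_cov T L = mincard (covering_family T L)"
  unfolding m_cov_def covering_family_def[abs_def] ..

lemma cf_sub_eq_mincard: "cf_sub T L = mincard (cofinal_family T L)"
  unfolding cf_sub_def cofinal_family_def[abs_def] ..

lemma cf_sup_eq_mincard: "cf_sup T L = mincard (coinitial_family T L)"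
  unfolding cf_sup_def coinitial_family_def[abs_def] ..

lemma m_fun_eq_mincard: "m_fun D L T C = mincard (guessing_family D L T C)"
  unfolding m_fun_def guessing_family_def[abs_def] small_valued_def ..

lemma subsets_of_size_iff: "X \<in> subsets_of_size L T \<longleftrightarrow> X \<subseteq> L \<and> |X| =o |T|"
  by (simp add: subsets_of_size_def)

lemma covering_family_member:
  "covering_family T L YY \<Longrightarrow> Y \<in> YY \<Longrightarrow> Y \<subseteq> L \<and> |Y| =o |T|"
  unfolding covering_family_def subsets_of_size_def by blast

lemma cofinal_family_subsets_of_size: "cofinal_family T L (subsets_of_size L T)"
  unfolding cofinal_family_def by blast

lemma coinitial_family_subsets_of_size: "coinitial_family T L (subsets_of_size L T)"
  unfolding coinitial_family_def by blast

lemma covering_family_if_cofinal: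
  assumes "cofinal_family T L YY"
  shows "covering_family T L YY"
  unfolding covering_family_def
proof (intro conjI ballI)
  show "YY \<subseteq> subsets_of_size L T"
    using assms unfolding cofinal_family_def by blast
next
  fix X assume X: "X \<in> subsets_of_size L T"
  then obtain Y where "Y \<in> YY" "X \<subseteq> Y"
    using assms unfolding cofinal_family_def by blast
  moreover have "|X| =o |T|"
    using X by (simp add: subsets_of_size_iff)
  moreover have "X \<inter> Y = X"
    using \<open>X \<subseteq> Y\<close> by blast
  ultimately have "|X \<inter> Y| =o |T|"
    by simp
  then show "\<exists>Y \<in> YY. |X \<inter> Y| =o |T|"
    using \<open>Y \<in> YY\<close> by blast
qed

lemma covering_family_if_coinitial:
  assumes "coinitial_family T L YY"
  shows "covering_family T L YY"
  unfolding covering_family_def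
proof (intro conjI ballI)
  show YY: "YY \<subseteq> subsets_of_size L T"
    using assms unfolding coinitial_family_def by blast
  fix X assume "X \<in> subsets_of_size L T"
  then obtain Y where "Y \<in> YY" "Y \<subseteq> X"
    using assms unfolding coinitial_family_def by blast
  moreover have "|Y| =o |T|"
    using YY \<open>Y \<in> YY\<close> by (auto simp: subsets_of_size_iff)
  moreover have "X \<inter> Y = Y"
    using \<open>Y \<subseteq> X\<close> by blast
  ultimately have "|X \<inter> Y| =o |T|"
    by simp
  then show "\<exists>Y \<in> YY. |X \<inter> Y| =o |T|"
    using \<open>Y \<in> YY\<close> by blast
qed

lemma small_valued_mono:
  assumes h: "small_valued D L C h" and "D \<subseteq> D'" "L \<subseteq> L'" and "|{} :: 'b set| <o |C|"
  shows "small_valued D' L' C (h :: 'a \<Rightarrow> 'b set)"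
proof -
  have "h \<xi> \<subseteq> L' \<and> |h \<xi>| <o |C|" if "\<xi> \<in> D'" for \<xi>
  proof (cases "\<xi> \<in> D")
    case True
    then show ?thesis
      using h assms(3) unfolding small_valued_def by blast
  next
    case False
    then have "h \<xi> = {}"
      using h unfolding small_valued_def by blast
    then show ?thesis
      using assms(4) by simp
  qed
  moreover have "h \<xi> = {}" if "\<xi> \<notin> D'" for \<xi>
    using that h assms(2) unfolding small_valued_def by blast
  ultimately show ?thesis
    unfolding small_valued_def by blast
qed

lemma guessing_family_all_small_valued:
  assumes "\<And>v :: 'b. |{v}| <o |C|"
  shows "guessing_family D (L :: 'b set) T C {h. small_valued D L C h}"
  unfolding guessing_family_def
proof (intro conjI ballI allI impI)
  fix X g assume X: "X \<in> subsets_of_size D T" and g: "\<forall>\<xi> \<in> X. g \<xi> \<in> L"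
  define h where "h \<xi> = (if \<xi> \<in> X then {g \<xi>} else {})" for \<xi>
  have "X \<subseteq> D" and XT: "|X| =o |T|"
    using X by (simp_all add: subsets_of_size_iff)
  then have "small_valued D L C h"
    using g assms ordLeq_ordLess_trans[OF card_of_empty assms]
    unfolding small_valued_def h_def by auto
  moreover have "{\<xi> \<in> X. g \<xi> \<in> h \<xi>} = X"
    unfolding h_def by auto
  ultimately show "\<exists>h \<in> {h. small_valued D L C h}. |{\<xi> \<in> X. g \<xi> \<in> h \<xi>}| =o |T|"
    using XT by auto
qed auto

lemma card_of_ge_covering_family:
  assumes "infinite T" "|T| <o |L|" and YY: "covering_family T L YY"
  shows "|L| \<le>o |YY|"
proof (rule ccontr)
  assume "\<not> |L| \<le>o |YY|"
  then have "|YY| <o |L|"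
    by (simp add: card_of_ordLess_iff_not_ordLeq)
  moreover have "\<forall>Y \<in> YY. |Y| \<le>o |T|"
    using covering_family_member[OF YY] ordIso_imp_ordLeq by blast
  ultimately have "|\<Union>Y \<in> YY. Y| <o |L|"
    using card_of_UNION_ordLess_infinite_bound[OF assms(1) _ assms(2), where A = "\<lambda>Y. Y"]
    by blast
  moreover have "infinite L"
    using card_of_ordLeq_infinite[OF ordLess_imp_ordLeq[OF assms(2)] assms(1)] .
  ultimately have "|L| \<le>o |L - (\<Union>Y \<in> YY. Y)|"
    by (rule card_of_Diff_ordLess_infinite[rotated])
  then have "|T| \<le>o |L - (\<Union>Y \<in> YY. Y)|"
    by (rule ordLeq_transitive[OF ordLess_imp_ordLeq[OF assms(2)]])
  then obtain X where X: "X \<subseteq> L - (\<Union>Y \<in> YY. Y)" "|X| =o |T|"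
    by (rule obtain_subset_card_of_ordIso)
  then have "X \<in> subsets_of_size L T"
    by (auto simp: subsets_of_size_iff)
  then obtain Y where "Y \<in> YY" "|X \<inter> Y| =o |T|"
    using YY unfolding covering_family_def by blast
  moreover have "X \<inter> Y = {}"
    using X(1) \<open>Y \<in> YY\<close> by blast
  ultimately have "|{} :: 'a set| =o |T|"
    by simp
  then show False
    using card_of_empty2[OF ordIso_symmetric] assms(1) by blast
qed

lemma card_of_UNION_small_valued:
  assumes "infinite T" "|C| \<le>o cardSuc |T|" "small_valued T L C h"
  shows "|\<Union>\<xi> \<in> T. h \<xi>| \<le>o |T|"
proof -
  have "\<forall>\<xi> \<in> T. |h \<xi>| <o cardSuc |T|"
    using assms(3) ordLess_ordLeq_trans[OF _ assms(2)] unfolding small_valued_def by blast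
  then have "\<forall>\<xi> \<in> T. |h \<xi>| \<le>o |T|"
    using cardSuc_ordLeq_ordLess[OF card_of_Card_order card_of_Card_order] by blast
  then show ?thesis
    using card_of_UNION_ordLeq_infinite[OF assms(1) ordLeq_refl[OF card_of_Card_order]] by blast
qed

lemma guessing_family_range_meets:
  assumes H: "guessing_family T L T C H" and X: "X \<in> subsets_of_size L T"
  shows "\<exists>h \<in> H. |X \<inter> (\<Union>\<xi> \<in> T. h \<xi>)| =o |T|"
proof -
  have "X \<subseteq> L" and XT: "|X| =o |T|"
    using X by (simp_all add: subsets_of_size_iff)
  obtain e where e: "bij_betw e T X"
    using card_of_ordIso ordIso_symmetric[OF XT] by blast
  have "T \<in> subsets_of_size T T"
    by (simp add: subsets_of_size_iff card_of_refl)
  moreover have "\<forall>\<xi> \<in> T. e \<xi> \<in> L"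
    using e \<open>X \<subseteq> L\<close> bij_betwE by blast
  ultimately obtain h where "h \<in> H" and hits: "|{\<xi> \<in> T. e \<xi> \<in> h \<xi>}| =o |T|"
    using H unfolding guessing_family_def by blast
  let ?S = "{\<xi> \<in> T. e \<xi> \<in> h \<xi>}"
  have "inj_on e ?S"
    using bij_betw_imp_inj_on[OF e] by (rule inj_on_subset) blast
  then have "|e ` ?S| =o |T|"
    by (rule ordIso_transitive[OF card_of_image_inj_on hits])
  moreover have "e ` ?S \<subseteq> X \<inter> (\<Union>\<xi> \<in> T. h \<xi>)"
    using e unfolding bij_betw_def by blast
  ultimately have "|X \<inter> (\<Union>\<xi> \<in> T. h \<xi>)| =o |T|"
    using card_of_ordIso_between[OF _ Int_lower1 XT] ordIso_imp_ordLeq[OF ordIso_symmetric]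
    by blast
  then show ?thesis
    using \<open>h \<in> H\<close> by blast
qed

lemma covering_family_from_guessing_family:
  assumes "infinite T" "|T| \<le>o |L|" "|C| \<le>o cardSuc |T|" and H: "guessing_family T L T C H"
  shows "\<exists>YY. covering_family T L YY \<and> |YY| \<le>o |H|"
proof -
  obtain X0 where X0: "X0 \<subseteq> L" "|X0| =o |T|"
    using assms(2) by (rule obtain_subset_card_of_ordIso)
  define Y where "Y h = (\<Union>\<xi> \<in> T. h \<xi>) \<union> X0" for h :: "'a \<Rightarrow> 'a set"
  have size: "Y h \<in> subsets_of_size L T" if "h \<in> H" for h
  proof -
    have h: "small_valued T L C h"
      using H that unfolding guessing_family_def by blast
    have "|Y h| \<le>o |T|"
      unfolding Y_def
      by (rule Un_Cinfinite_bound[OF card_of_UNION_small_valued[OF assms(1,3) h]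
          ordIso_imp_ordLeq[OF X0(2)] Cinfinite_card_of[OF assms(1)]])
    moreover have "|T| \<le>o |Y h|"
      using ordIso_ordLeq_trans[OF ordIso_symmetric[OF X0(2)] card_of_mono1[of X0 "Y h"]]
      unfolding Y_def by blast
    moreover have "Y h \<subseteq> L"
      using h X0(1) unfolding Y_def small_valued_def by blast
    ultimately show ?thesis
      by (simp add: subsets_of_size_iff ordIso_iff_ordLeq)
  qed
  have hit: "\<exists>h \<in> H. |X \<inter> Y h| =o |T|" if X: "X \<in> subsets_of_size L T" for X
  proof -
    obtain h where "h \<in> H" and meets: "|X \<inter> (\<Union>\<xi> \<in> T. h \<xi>)| =o |T|"
      using guessing_family_range_meets[OF H X] by blast
    have "|X| =o |T|"
      using X by (simp add: subsets_of_size_iff)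
    then have "|X \<inter> Y h| =o |T|"
      using card_of_ordIso_between[OF _ Int_lower1 _ ordIso_imp_ordLeq[OF ordIso_symmetric[OF meets]]]
      unfolding Y_def by blast
    then show ?thesis
      using \<open>h \<in> H\<close> by blast
  qed
  have "covering_family T L (Y ` H)"
    unfolding covering_family_def using size hit by fast
  then show ?thesis
    using card_of_image by blast
qed

section \<open>Transporting and gluing guessing families\<close>

definition pullback ::
    "('a \<Rightarrow> 'b) \<Rightarrow> ('c \<Rightarrow> 'd) \<Rightarrow> 'a set \<Rightarrow> 'c set \<Rightarrow> ('b \<Rightarrow> 'd set) \<Rightarrow> 'a \<Rightarrow> 'c set" where
  "pullback a b D L h \<xi> =
     (if \<xi> \<in> D then {v \<in> L. b v \<in> h (a \<xi>)} else {})"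

lemma small_valued_pullback:
  assumes "small_valued D L C h" "a ` D' \<subseteq> D" "inj_on b L'"
  shows "small_valued D' L' C (pullback a b D' L' h)"
proof -
  have "|{v \<in> L'. b v \<in> h (a \<xi>)}| <o |C|" if "\<xi> \<in> D'" for \<xi>
  proof -
    have "|{v \<in> L'. b v \<in> h (a \<xi>)}| \<le>o |h (a \<xi>)|"
      by (rule card_of_ordLeqI[of b]) (auto intro: inj_on_subset[OF assms(3)])
    moreover have "|h (a \<xi>)| <o |C|"
      using assms(1,2) that unfolding small_valued_def by blast
    ultimately show ?thesis
      by (rule ordLeq_ordLess_trans)
  qed
  then show ?thesis
    unfolding small_valued_def pullback_def by auto
qed

lemma guessing_family_pullback:
  assumes H: "guessing_family D L T C H"
    and a: "inj_on a D'" "a ` D' \<subseteq> D" and b: "inj_on b L'" "b ` L' \<subseteq> L"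
  shows "guessing_family D' L' T C (pullback a b D' L' ` H)"
  unfolding guessing_family_def
proof (intro conjI ballI allI impI)
  fix h' assume "h' \<in> pullback a b D' L' ` H"
  then obtain h where "h \<in> H" "h' = pullback a b D' L' h"
    by blast
  moreover have "small_valued D L C h"
    using H \<open>h \<in> H\<close> unfolding guessing_family_def by blast
  ultimately show "small_valued D' L' C h'"
    using small_valued_pullback[OF _ a(2) b(1)] by simp
next
  fix X g assume X: "X \<in> subsets_of_size D' T" and g: "\<forall>\<xi> \<in> X. g \<xi> \<in> L'"
  have "X \<subseteq> D'" and XT: "|X| =o |T|"
    using X by (simp_all add: subsets_of_size_iff)
  then have inj: "inj_on a X"
    using a(1) inj_on_subset by blast
  define g' where "g' \<eta> = b (g (inv_into X a \<eta>))" for \<eta>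
  have "a ` X \<in> subsets_of_size D T"
    using \<open>X \<subseteq> D'\<close> a(2) ordIso_transitive[OF card_of_image_inj_on[OF inj] XT]
    by (auto simp: subsets_of_size_iff)
  moreover have "\<forall>\<eta> \<in> a ` X. g' \<eta> \<in> L"
    using g b(2) inv_into_f_f[OF inj] unfolding g'_def by auto
  ultimately obtain h where "h \<in> H" and hits: "|{\<eta> \<in> a ` X. g' \<eta> \<in> h \<eta>}| =o |T|"
    using H unfolding guessing_family_def by blast
  let ?S = "{\<xi> \<in> X. g \<xi> \<in> pullback a b D' L' h \<xi>}"
  have "inj_on a ?S"
    using inj by (rule inj_on_subset) blast
  then have "|?S| =o |a ` ?S|"
    by (rule ordIso_symmetric[OF card_of_image_inj_on])
  moreover have "a ` ?S = {\<eta> \<in> a ` X. g' \<eta> \<in> h \<eta>}"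
    using \<open>X \<subseteq> D'\<close> g inv_into_f_f[OF inj] unfolding g'_def pullback_def by auto
  ultimately have "|?S| =o |T|"
    using ordIso_transitive[OF _ hits] by simp
  then show "\<exists>h' \<in> pullback a b D' L' ` H. |{\<xi> \<in> X. g \<xi> \<in> h' \<xi>}| =o |T|"
    using \<open>h \<in> H\<close> by blast
qed

lemma guessing_family_card_mono:
  assumes "|D'| \<le>o |D|" "|L'| \<le>o |L|" "guessing_family D L T C H"
  shows "\<exists>H'. guessing_family D' L' T C H' \<and> |H'| \<le>o |H|"
proof -
  obtain a b where "inj_on a D'" "a ` D' \<subseteq> D" "inj_on b L'" "b ` L' \<subseteq> L"
    using assms(1,2) card_of_ordLeq by metis
  then have "guessing_family D' L' T C (pullback a b D' L' ` H)"
    by (rule guessing_family_pullback[OF assms(3)])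
  then show ?thesis
    using card_of_image by blast
qed

lemma guess_through_covering_family:
  assumes YY: "covering_family T L YY"
    and G: "\<And>Y Y'. Y \<in> YY \<Longrightarrow> Y' \<in> YY \<Longrightarrow> guessing_family Y Y' T C (G Y Y')"
    and "Y \<in> YY" and X: "X \<in> subsets_of_size L T" and g: "\<forall>\<xi> \<in> X. g \<xi> \<in> L"
    and large: "|T| \<le>o |g ` (X \<inter> Y)|"
  shows "\<exists>Y' \<in> YY. \<exists>h \<in> G Y Y'. |{\<xi> \<in> X. g \<xi> \<in> h \<xi>}| =o |T|"
proof -
  have XT: "|X| =o |T|"
    using X by (simp add: subsets_of_size_iff)
  have "|g ` (X \<inter> Y)| \<le>o |X|"
    using ordLeq_transitive[OF card_of_image card_of_mono1[OF Int_lower1]] .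
  then have "|g ` (X \<inter> Y)| \<le>o |T|"
    using XT by (rule ordLeq_ordIso_trans)
  moreover have "g ` (X \<inter> Y) \<subseteq> L"
    using g by blast
  ultimately have "g ` (X \<inter> Y) \<in> subsets_of_size L T"
    using large by (simp add: subsets_of_size_iff ordIso_iff_ordLeq)
  then obtain Y' where "Y' \<in> YY" and Y': "|g ` (X \<inter> Y) \<inter> Y'| =o |T|"
    using YY unfolding covering_family_def by blast
  define B where "B = {x \<in> X \<inter> Y. g x \<in> Y'}"
  have "B \<subseteq> X"
    unfolding B_def by blast
  have "g ` B = g ` (X \<inter> Y) \<inter> Y'"
    unfolding B_def by blast
  then have "|T| \<le>o |B|"
    using ordIso_ordLeq_trans[OF ordIso_symmetric[OF Y'], of "|B|"] card_of_image[of g B] by simp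
  then have "|B| =o |T|"
    by (rule card_of_ordIso_between[OF subset_refl \<open>B \<subseteq> X\<close> XT])
  moreover have "B \<subseteq> Y"
    unfolding B_def by blast
  ultimately have "B \<in> subsets_of_size Y T"
    by (simp add: subsets_of_size_iff)
  moreover have "\<forall>\<xi> \<in> B. g \<xi> \<in> Y'"
    unfolding B_def by blast
  ultimately obtain h where "h \<in> G Y Y'" and hits: "|{\<xi> \<in> B. g \<xi> \<in> h \<xi>}| =o |T|"
    using G[OF \<open>Y \<in> YY\<close> \<open>Y' \<in> YY\<close>] unfolding guessing_family_def by blast
  have "{\<xi> \<in> B. g \<xi> \<in> h \<xi>} \<subseteq> {\<xi> \<in> X. g \<xi> \<in> h \<xi>}"
    using \<open>B \<subseteq> X\<close> by blast
  then have "|{\<xi> \<in> X. g \<xi> \<in> h \<xi>}| =o |T|"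
    by (rule card_of_ordIso_between[OF _ _ XT ordIso_imp_ordLeq[OF ordIso_symmetric[OF hits]]]) blast
  then show ?thesis
    using \<open>Y' \<in> YY\<close> \<open>h \<in> G Y Y'\<close> by blast
qed

lemma constant_guesses_large_fiber:
  assumes "infinite T" and X: "X \<in> subsets_of_size L T" and g: "\<forall>\<xi> \<in> X. g \<xi> \<in> L"
    and "A \<subseteq> X" and fiber: "|T| \<le>o |{x \<in> A. g x = v}|"
  shows "v \<in> L \<and> |{\<xi> \<in> X. g \<xi> \<in> (if \<xi> \<in> L then {v} else {})}| =o |T|"
proof
  have "{x \<in> A. g x = v} \<noteq> {}"
  proof
    assume empty: "{x \<in> A. g x = v} = {}"
    from fiber have "|T| \<le>o |{} :: 'a set|"
      by (simp only: empty)
    then show False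
      using assms(1) card_of_empty3 by fastforce
  qed
  then show "v \<in> L"
    using g \<open>A \<subseteq> X\<close> by blast
  have "X \<subseteq> L" and XT: "|X| =o |T|"
    using X by (simp_all add: subsets_of_size_iff)
  then have "{x \<in> A. g x = v} \<subseteq> {\<xi> \<in> X. g \<xi> \<in> (if \<xi> \<in> L then {v} else {})}"
    using \<open>A \<subseteq> X\<close> by auto
  then show "|{\<xi> \<in> X. g \<xi> \<in> (if \<xi> \<in> L then {v} else {})}| =o |T|"
    by (rule card_of_ordIso_between[OF _ _ XT fiber]) blast
qed

lemma guessing_family_glue:
  fixes L :: "'a set"
  assumes T: "infinite T" "regularCard |T|" and YY: "covering_family T L YY"
    and G: "\<And>Y Y'. Y \<in> YY \<Longrightarrow> Y' \<in> YY \<Longrightarrow> guessing_family Y Y' T C (G Y Y')"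
    and C: "\<And>v :: 'a. |{v}| <o |C|"
  shows "guessing_family L L T C
           ((\<lambda>v \<eta>. if \<eta> \<in> L then {v} else {}) ` L \<union> (\<Union>Y \<in> YY. \<Union>Y' \<in> YY. G Y Y'))"
    (is "guessing_family L L T C (?K ` L \<union> ?G)")
  unfolding guessing_family_def
proof (intro conjI ballI allI impI)
  fix h assume "h \<in> ?K ` L \<union> ?G"
  then show "small_valued L L C h"
  proof
    assume "h \<in> ?K ` L"
    then show ?thesis
      using C unfolding small_valued_def by auto
  next
    assume "h \<in> ?G"
    then obtain Y Y' where "Y \<in> YY" "Y' \<in> YY" "h \<in> G Y Y'"
      by blast
    then have "small_valued Y Y' C h"
      using G unfolding guessing_family_def by blast
    moreover have "Y \<subseteq> L" "Y' \<subseteq> L"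
      using covering_family_member[OF YY] \<open>Y \<in> YY\<close> \<open>Y' \<in> YY\<close> by blast+
    moreover have "|{} :: 'a set| <o |C|"
      using ordLeq_ordLess_trans[OF card_of_empty C] .
    ultimately show ?thesis
      by (rule small_valued_mono)
  qed
next
  fix X g assume X: "X \<in> subsets_of_size L T" and g: "\<forall>\<xi> \<in> X. g \<xi> \<in> L"
  obtain Y where "Y \<in> YY" and Y: "|X \<inter> Y| =o |T|"
    using YY X unfolding covering_family_def by blast
  have "|T| \<le>o |X \<inter> Y|"
    using ordIso_imp_ordLeq[OF ordIso_symmetric[OF Y]] .
  then consider (fiber) v where "|T| \<le>o |{x \<in> X \<inter> Y. g x = v}|"
    | (image) "|T| \<le>o |g ` (X \<inter> Y)|"
    using card_of_regular_large_fiber_or_image[OF T, where g = g] by blast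
  then show "\<exists>h \<in> ?K ` L \<union> ?G. |{\<xi> \<in> X. g \<xi> \<in> h \<xi>}| =o |T|"
  proof cases
    case fiber
    have "v \<in> L \<and> |{\<xi> \<in> X. g \<xi> \<in> ?K v \<xi>}| =o |T|"
      using constant_guesses_large_fiber[OF T(1) X g Int_lower1 fiber] by simp
    then have hits: "|{\<xi> \<in> X. g \<xi> \<in> ?K v \<xi>}| =o |T|" and "?K v \<in> ?K ` L \<union> ?G"
      by blast+
    then show ?thesis
      by (rule bexI)
  next
    case image
    then obtain Y' h where "Y' \<in> YY" "h \<in> G Y Y'" "|{\<xi> \<in> X. g \<xi> \<in> h \<xi>}| =o |T|"
      using guess_through_covering_family[OF YY G \<open>Y \<in> YY\<close> X g] by blast
    moreover have "h \<in> ?G"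
      using \<open>Y \<in> YY\<close> \<open>Y' \<in> YY\<close> \<open>h \<in> G Y Y'\<close> by blast
    ultimately show ?thesis
      by blast
  qed
qed

lemma guessing_family_from_covering_family:
  fixes L :: "'a set"
  assumes T: "infinite T" "regularCard |T|" and "infinite L"
    and YY: "covering_family T L YY" "|L| \<le>o |YY|"
    and H0: "guessing_family T T T C H0" and C: "\<And>v :: 'a. |{v}| <o |C|"
  shows "\<exists>H. guessing_family L L T C H \<and> ( |H| \<le>o |H0| \<or> |H| \<le>o |YY| )"
proof -
  have "\<exists>p. bij_betw p Y T" if "Y \<in> YY" for Y
    using covering_family_member[OF YY(1) that] card_of_ordIso by blast
  then obtain p where p: "\<And>Y. Y \<in> YY \<Longrightarrow> bij_betw (p Y) Y T"
    by metis
  define G where "G Y Y' = pullback (p Y) (p Y') Y Y' ` H0" for Y Y'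
  define K where "K v = (\<lambda>\<eta>. if \<eta> \<in> L then {v} else {})" for v :: 'a
  define H where "H = K ` L \<union> (\<Union>Y \<in> YY. \<Union>Y' \<in> YY. G Y Y')"
  have "guessing_family Y Y' T C (G Y Y')" if "Y \<in> YY" "Y' \<in> YY" for Y Y'
    unfolding G_def
    by (rule guessing_family_pullback[OF H0])
      (use p[OF that(1)] p[OF that(2)] in \<open>auto simp: bij_betw_def\<close>)
  then have "guessing_family L L T C H"
    unfolding H_def K_def by (rule guessing_family_glue[OF T YY(1) _ C])
  have "infinite YY"
    using card_of_ordLeq_infinite[OF YY(2) \<open>infinite L\<close>] .
  have KL: "|K ` L| \<le>o |YY|"
    using ordLeq_transitive[OF card_of_image YY(2)] .
  have GH0: "\<forall>Y \<in> YY. \<forall>Y' \<in> YY. |G Y Y'| \<le>o |H0|"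
    unfolding G_def using card_of_image by blast
  from card_of_ordLeq_total[of H0 YY] have "|H| \<le>o |H0| \<or> |H| \<le>o |YY|"
  proof
    assume H0YY: "|H0| \<le>o |YY|"
    have "\<forall>Y \<in> YY. \<forall>Y' \<in> YY. |G Y Y'| \<le>o |YY|"
      using GH0 ordLeq_transitive[OF _ H0YY] by blast
    then show ?thesis
      unfolding H_def using card_of_Un_UNION2_ordLeq[OF Cinfinite_card_of[OF \<open>infinite YY\<close>] KL
        ordLeq_refl[OF card_of_Card_order]] by blast
  next
    assume YYH0: "|YY| \<le>o |H0|"
    have "Cinfinite |H0|"
      using Cinfinite_card_of[OF card_of_ordLeq_infinite[OF YYH0 \<open>infinite YY\<close>]] .
    then show ?thesis
      unfolding H_def using card_of_Un_UNION2_ordLeq[OF _ ordLeq_transitive[OF KL YYH0] YYH0 GH0]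
      by blast
  qed
  then show ?thesis
    using \<open>guessing_family L L T C H\<close> by blast
qed

section \<open>The cardinal invariants\<close>

lemma card_of_le_m_cov:
  assumes "infinite T" "|T| <o |L|"
  shows "|L| \<le>o m_cov T L"
  unfolding m_cov_eq_mincard
  using card_of_ge_covering_family[OF assms]
  by (rule mincard_ge[of "covering_family T L",
        OF covering_family_if_cofinal[OF cofinal_family_subsets_of_size]])

lemma m_cov_le_cf_sub: "m_cov T L \<le>o cf_sub T L"
  unfolding m_cov_eq_mincard cf_sub_eq_mincard
  using cofinal_family_subsets_of_size covering_family_if_cofinal by (rule mincard_antimono)

lemma m_cov_le_cf_sup: "m_cov T L \<le>o cf_sup T L"
  unfolding m_cov_eq_mincard cf_sup_eq_mincard
  using coinitial_family_subsets_of_size covering_family_if_coinitial by (rule mincard_antimono)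

lemma m_cov_le_m_fun:
  fixes L :: "'a set"
  assumes "infinite T" "|T| \<le>o |L|" "|C| \<le>o cardSuc |T|" and "\<And>v :: 'a. |{v}| <o |C|"
  shows "m_cov T L \<le>o m_fun T L T C"
  unfolding m_cov_eq_mincard m_fun_eq_mincard
  using guessing_family_all_small_valued[OF assms(4)]
    covering_family_from_guessing_family[OF assms(1-3)]
  by (rule mincard_le_mincard[of "guessing_family T L T C"])

lemma m_fun_mono:
  fixes L :: "'b set"
  assumes "|D'| \<le>o |D|" "|L'| \<le>o |L|" and "\<And>v :: 'b. |{v}| <o |C|"
  shows "m_fun D' L' T C \<le>o m_fun D L T C"
  unfolding m_fun_eq_mincard
  using guessing_family_all_small_valued[OF assms(3)] guessing_family_card_mono[OF assms(1,2)]
  by (rule mincard_le_mincard[of "guessing_family D L T C"])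

lemma m_fun_le_m_fun_or_m_cov:
  fixes L T :: "'a set"
  assumes "infinite L" "infinite T" "regularCard |T|" "|T| <o |L|" and C: "\<And>v :: 'a. |{v}| <o |C|"
  shows "m_fun L L T C \<le>o m_fun T T T C \<or> m_fun L L T C \<le>o m_cov T L"
proof -
  obtain YY where YY: "covering_family T L YY" "m_cov T L = |YY|"
    using mincard_attained[of "covering_family T L",
        OF covering_family_if_cofinal[OF cofinal_family_subsets_of_size]]
    unfolding m_cov_eq_mincard by blast
  obtain H0 where H0: "guessing_family T T T C H0" "m_fun T T T C = |H0|"
    using mincard_attained[of "guessing_family T T T C", OF guessing_family_all_small_valued[OF C]]
    unfolding m_fun_eq_mincard by blast
  obtain H where H: "guessing_family L L T C H" and small: "|H| \<le>o |H0| \<or> |H| \<le>o |YY|"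
    using guessing_family_from_covering_family[OF assms(2,3,1) YY(1)
        card_of_ge_covering_family[OF assms(2,4) YY(1)] H0(1) C] by blast
  have "m_fun L L T C \<le>o |H|"
    unfolding m_fun_eq_mincard using H by (rule mincard_le)
  with small show ?thesis
    unfolding H0(2) YY(2) by (elim disjE) (simp_all add: ordLeq_transitive)
qed

end

theorem lemma2p4:
  fixes L T C :: "'a set"
  assumes "infinite L"
    and "infinite T" and "regularCard (card_of T)"
    and "(card_of T, card_of L) \<in> ordLess"
    and "(finite C \<and> card C = 2) \<or> infinite C"
  shows "(card_of L, m_cov T L) \<in> ordLeq
       \<and> (m_cov T L, cf_sub T L) \<in> ordLeq \<and> (m_cov T L, cf_sup T L) \<in> ordLeq
       \<and> ((card_of C, cardSuc (card_of T)) \<in> ordLeq \<longrightarrow> (m_cov T L, m_fun T L T C) \<in> ordLeq)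
       \<and> (m_fun T T T C, m_fun L L T C) \<in> ordLeq
       \<and> ((m_fun L L T C, m_fun T T T C) \<in> ordLeq \<or> (m_fun L L T C, m_cov T L) \<in> ordLeq)"
proof -
  have C: "\<And>v :: 'a. (card_of {v}, card_of C) \<in> ordLess"
    using assms(5) by (intro card_of_singleton_ordLess) auto
  have TL: "(card_of T, card_of L) \<in> ordLeq"
    using assms(4) by (rule ordLess_imp_ordLeq)
  show ?thesis
    using card_of_le_m_cov[OF assms(2,4)] m_cov_le_cf_sub[of T L] m_cov_le_cf_sup[of T L]
      m_cov_le_m_fun[OF assms(2) TL _ C] m_fun_mono[OF TL TL C]
      m_fun_le_m_fun_or_m_cov[OF assms(1-4) C]
    by blast
qed

end
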